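(* Let $(Q,\rightarrow)$ be a finite transition system and $\mathscr{R}$ a preorder on $Q$. Then $\rightarrow^{-1}\subseteq \rightarrow_{\mathscr{R}}^{-1}\circ\mathscr{R}$ and $\rightarrow^{-1}\circ\mathscr{R}=\rightarrow_{\mathscr{R}}^{-1}\circ\mathscr{R}$. Explicitly: for every transition $q\rightarrow q'$ there is $q''$ with $q'\,\mathscr{R}\,q''$ and $q\rightarrow_{\mathscr{R}} q''$; and for all $x,y\in Q$, there exists $z$ with $x\,\mathscr{R}\,z$ and $y\rightarrow z$ iff there exists $z$ with $x\,\mathscr{R}\,z$ and $y\rightarrow_{\mathscr{R}} z$.
   Context: A finite transition system is a pair $(Q,\rightarrow)$ with $Q$ a finite set and $\rightarrow\subseteq Q\times Q$. For relations $\mathscr{R},\mathscr{S}$ on $Q$, $\mathscr{R}(q)=\{q'\mid q\,\mathscr{R}\,q'\}$, $\mathscr{R}(X)=\bigcup_{q\in X}\mathscr{R}(q)$, $\mathscr{R}^{-1}=\{(y,x)\mid (x,y)\in\mathscr{R}\}$, and the composition is $\mathscr{S}\circ\mathscr{R}=\{(x,y)\mid y\in\mathscr{S}(\mathscr{R}(x))\}$ (first $\mathscr{R}$, then $\mathscr{S}$). A preorder is a reflexive transitive relation; $[q]_{\mathscr{R}}=\{q'\mid q\,\mathscr{R}\,q'\wedge q'\,\mathscr{R}\,q\}$. A transition $q\rightarrow q'$ is $\mathscr{R}$-maximal, written $q\rightarrow_{\mathscr{R}}q'$, if for all $q''\in Q$, ($q\rightarrow q''$ and $q'\,\mathscr{R}\,q''$)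 implies $q''\in[q']_{\mathscr{R}}$; $\rightarrow_{\mathscr{R}}$ also denotes the relation formed by these transitions. *)

theory Defs
  imports Main
begin

text \<open>A finite transition system is modelled by a finite type 'q (the state set Q = UNIV)
  together with a transition relation T :: 'q rel.\<close>

definition eq_class :: "'q rel \<Rightarrow> 'q \<Rightarrow> 'q set" where
  "eq_class R q = {q'. (q, q') \<in> R \<and> (q', q) \<in> R}"

definition max_trans :: "'q rel \<Rightarrow> 'q rel \<Rightarrow> 'q rel" where
  "max_trans T R = {(q, q'). (q, q') \<in> T \<and>
     (\<forall>q''. (q, q'') \<in> T \<and> (q', q'') \<in> R \<longrightarrow> q'' \<in> eq_class R q')}"

end

theory Submission
  imports Defs
begin

(* Every transition q -> q' can be pushed R-upwards to a maximal one: among the successors of q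
   lying R-above q', one whose R-upset is smallest is R-maximal, since a strictly R-larger
   successor would have a strictly smaller upset. Composing with R on the left absorbs the
   extra R-step, which gives the equality of the two compositions. *)

lemma max_trans_subset: "max_trans T R \<subseteq> T"
  by (auto simp: max_trans_def)

lemma finite_preorder_has_maximal:
  assumes "refl R" and "trans R" and "finite S" and "x \<in> S"
  obtains z where "z \<in> S" and "\<And>z'. z' \<in> S \<Longrightarrow> (z, z') \<in> R \<Longrightarrow> (z', z) \<in> R"
proof -
  let ?up = "\<lambda>z. card (R `` {z} \<inter> S)"
  obtain z where "z \<in> S" and least: "\<And>y. y \<in> S \<Longrightarrow> ?up z \<le> ?up y"
    using ex_has_least_nat[of "\<lambda>z. z \<in> S" x ?up] assms(4) by blast
  have "(z', z) \<in> R" if "z' \<in> S" and "(z, z') \<in> R" for z'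
  proof (rule ccontr)
    assume "(z', z) \<notin> R"
    with \<open>refl R\<close> \<open>z \<in> S\<close> have "z \<notin> R `` {z'} \<inter> S" and "z \<in> R `` {z} \<inter> S"
      by (auto simp: refl_on_def)
    moreover have "R `` {z'} \<inter> S \<subseteq> R `` {z} \<inter> S"
      using \<open>(z, z') \<in> R\<close> \<open>trans R\<close> by (blast dest: transD)
    ultimately have "R `` {z'} \<inter> S \<subset> R `` {z} \<inter> S" by blast
    then have "?up z' < ?up z" using \<open>finite S\<close> by (simp add: psubset_card_mono)
    with least[OF \<open>z' \<in> S\<close>] show False by simp
  qed
  with \<open>z \<in> S\<close> show thesis by (rule that)
qed

lemma exists_max_trans_above:
  fixes T R :: "('q::finite) rel"
  assumes "refl R" and "trans R" and "(q, q') \<in> T"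
  obtains q'' where "(q', q'') \<in> R" and "(q, q'') \<in> max_trans T R"
proof -
  define S where "S = {z. (q, z) \<in> T \<and> (q', z) \<in> R}"
  have "q' \<in> S" using assms by (auto simp: S_def refl_on_def)
  obtain z where "z \<in> S" and maximal: "\<And>z'. z' \<in> S \<Longrightarrow> (z, z') \<in> R \<Longrightarrow> (z', z) \<in> R"
    using finite_preorder_has_maximal[OF assms(1,2) finite \<open>q' \<in> S\<close>] by blast
  have "(q, z) \<in> max_trans T R"
  proof -
    have "z'' \<in> eq_class R z" if "(q, z'') \<in> T" and "(z, z'') \<in> R" for z''
    proof -
      have "z'' \<in> S" using that \<open>z \<in> S\<close> \<open>trans R\<close> by (auto simp: S_def dest: transD)
      with maximal that show ?thesis by (simp add: eq_class_def)
    qed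
    with \<open>z \<in> S\<close> show ?thesis by (auto simp: S_def max_trans_def)
  qed
  with \<open>z \<in> S\<close> show thesis by (intro that) (simp_all add: S_def)
qed

lemma relcomp_converse_max_trans:
  fixes T R :: "('q::finite) rel"
  assumes "refl R" and "trans R"
  shows "R O converse T = R O converse (max_trans T R)"
proof
  show "R O converse T \<subseteq> R O converse (max_trans T R)"
  proof clarify
    fix x z y assume "(x, z) \<in> R" and "(y, z) \<in> T"
    then obtain w where "(z, w) \<in> R" and "(y, w) \<in> max_trans T R"
      using exists_max_trans_above[OF assms] by blast
    with \<open>(x, z) \<in> R\<close> \<open>trans R\<close> show "(x, y) \<in> R O converse (max_trans T R)"
      by (blast dest: transD)
  qed
  show "R O converse (max_trans T R) \<subseteq> R O converse T"
    using max_trans_subset by blast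
qed

theorem lemma1:
  fixes T R :: "('q::finite) rel"
  assumes "refl R" and "trans R"
  shows "converse T \<subseteq> R O converse (max_trans T R)
    \<and> R O converse T = R O converse (max_trans T R)
    \<and> (\<forall>q q'. (q, q') \<in> T \<longrightarrow> (\<exists>q''. (q', q'') \<in> R \<and> (q, q'') \<in> max_trans T R))
    \<and> (\<forall>x y. (\<exists>z. (x, z) \<in> R \<and> (y, z) \<in> T) \<longleftrightarrow> (\<exists>z. (x, z) \<in> R \<and> (y, z) \<in> max_trans T R))"
proof -
  have above: "\<forall>q q'. (q, q') \<in> T \<longrightarrow> (\<exists>q''. (q', q'') \<in> R \<and> (q, q'') \<in> max_trans T R)"
    using exists_max_trans_above[OF assms] by blast
  then have "converse T \<subseteq> R O converse (max_trans T R)" by blast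
  moreover have comp: "R O converse T = R O converse (max_trans T R)"
    by (rule relcomp_converse_max_trans[OF assms])
  moreover have "\<forall>x y. (\<exists>z. (x, z) \<in> R \<and> (y, z) \<in> T) \<longleftrightarrow> (\<exists>z. (x, z) \<in> R \<and> (y, z) \<in> max_trans T R)"
  proof (intro allI)
    fix x y
    have "(x, y) \<in> R O converse T \<longleftrightarrow> (x, y) \<in> R O converse (max_trans T R)"
      by (simp only: comp)
    then show "(\<exists>z. (x, z) \<in> R \<and> (y, z) \<in> T) \<longleftrightarrow> (\<exists>z. (x, z) \<in> R \<and> (y, z) \<in> max_trans T R)"
      by blast
  qed
  ultimately show ?thesis using above by blast
qed

end
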